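(* Let $T_1=(V,E_1)$ and $T_2=(V,E_2)$ be trees on the common vertex set $V=\{1,\dots,n\}$. Suppose there are orderings $\pi_1=(\tau_1,\dots,\tau_{n-1})$ of $E_1$ and $\pi_2=(\sigma_1,\dots,\sigma_{n-1})$ of $E_2$ such that $\mathcal{K}_{\pi_1}(T_1)=\mathcal{K}_{\pi_2}(T_2)$ in $\mathbb{C}[S_n]$. Then $E_1=E_2$ (so $T_1=T_2$). Moreover, whenever two distinct edges $(i,j)$ and $(j,k)$ share the endpoint $j$ and $(i,j)$ precedes $(j,k)$ in $\pi_1$, then $(i,j)$ also precedes $(j,k)$ in $\pi_2$.
   Context: $\mathbb{C}[S_n]$ is the group algebra of the symmetric group $S_n$; an edge $(i,j)$ is identified with the transposition $(i\,j)\in S_n$. For a graph $G$ with vertex set labeled by $\{1,\dots,n\}$ and an ordering $\pi=(e_1,\dots,e_m)$ of its edges, $\mathcal{K}_\pi(G)=n!\,(1-e_1)(1-e_2)\cdots(1-e_m)\in\mathbb{C}[S_n]$, the product taken in the order given by $\pi$ (here $1$ is the identity permutation). *)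

theory Defs
  imports Complex_Main "HOL-Combinatorics.Permutations"
begin

text \<open>Elements of the group algebra C[S_n] are represented as complex-valued
functions on permutations of {1..n} (functions nat => nat), set to 0 outside S_n.
The product of permutations sigma tau is composition sigma o tau.\<close>

type_synonym galg = "(nat \<Rightarrow> nat) \<Rightarrow> complex"

definition Sn :: "nat \<Rightarrow> (nat \<Rightarrow> nat) set" where
  "Sn n = {p. p permutes {1..n}}"

definition ga_basis :: "nat \<Rightarrow> (nat \<Rightarrow> nat) \<Rightarrow> galg" where
  "ga_basis n p = (\<lambda>s. if s \<in> Sn n \<and> s = p then 1 else 0)"

definition ga_one :: "nat \<Rightarrow> galg" where
  "ga_one n = ga_basis n id"

definition ga_mult :: "nat \<Rightarrow> galg \<Rightarrow> galg \<Rightarrow> galg" where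
  "ga_mult n f g = (\<lambda>s. if s \<in> Sn n then (\<Sum>t\<in>Sn n. f t * g (inv t \<circ> s)) else 0)"

definition ga_diff :: "galg \<Rightarrow> galg \<Rightarrow> galg" where
  "ga_diff f g = (\<lambda>s. f s - g s)"

definition ga_scale :: "complex \<Rightarrow> galg \<Rightarrow> galg" where
  "ga_scale c f = (\<lambda>s. c * f s)"

definition edge_transp :: "nat set \<Rightarrow> (nat \<Rightarrow> nat)" where
  "edge_transp e = Transposition.transpose (Min e) (Max e)"

definition Kpi :: "nat \<Rightarrow> nat set list \<Rightarrow> galg" where
  "Kpi n es = ga_scale (of_nat (fact n))
     (foldr (\<lambda>e acc. ga_mult n (ga_diff (ga_one n) (ga_basis n (edge_transp e))) acc) es (ga_one n))"

definition is_graph :: "nat \<Rightarrow> nat set set \<Rightarrow> bool" where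
  "is_graph n E \<longleftrightarrow> (\<forall>e\<in>E. \<exists>i j. e = {i, j} \<and> i \<noteq> j \<and> i \<in> {1..n} \<and> j \<in> {1..n})"

definition adj_rel :: "nat set set \<Rightarrow> (nat \<times> nat) set" where
  "adj_rel E = {(u, v). {u, v} \<in> E}"

definition connected_graph :: "nat \<Rightarrow> nat set set \<Rightarrow> bool" where
  "connected_graph n E \<longleftrightarrow> (\<forall>u\<in>{1..n}. \<forall>v\<in>{1..n}. (u, v) \<in> (adj_rel E)\<^sup>*)"

definition has_cycle :: "nat set set \<Rightarrow> bool" where
  "has_cycle E \<longleftrightarrow> (\<exists>cs. length cs \<ge> 3 \<and> distinct cs \<and>
      (\<forall>i < length cs. {cs ! i, cs ! ((i + 1) mod length cs)} \<in> E))"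

definition is_tree :: "nat \<Rightarrow> nat set set \<Rightarrow> bool" where
  "is_tree n E \<longleftrightarrow> is_graph n E \<and> connected_graph n E \<and> \<not> has_cycle E"

definition edge_ordering :: "nat set set \<Rightarrow> nat set list \<Rightarrow> bool" where
  "edge_ordering E \<pi> \<longleftrightarrow> distinct \<pi> \<and> set \<pi> = E"

definition precedes :: "'a \<Rightarrow> 'a \<Rightarrow> 'a list \<Rightarrow> bool" where
  "precedes a b xs \<longleftrightarrow> (\<exists>p q. p < q \<and> q < length xs \<and> xs ! p = a \<and> xs ! q = b)"

end

theory Submission
  imports Defs "HOL-Library.Transitive_Closure_Table"
begin

(* Expanding the product, K_pi(G) = n! * sum of (-1)^|S| e_S over the subsequences S of pi, where
   e_S is the product of the transpositions in S.  If the edges form a forest, the product of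
   distinct edges moves exactly the vertices they cover: the endpoints of each new edge lie in
   different components of the forest spanned by the earlier ones, so neither is sent to the other.
   Hence in a forest the transposition (a b) is e_S only for S = [{a,b}], and the 3-cycle
   (i j)(j k) only for S = [{i,j},{j,k}] (the reversed order gives (j k)(i j) and the edge {i,k}
   would close a triangle).  So the coefficient of (a b) in K_pi is nonzero iff {a,b} is an edge,
   and that of (i j)(j k) is nonzero iff {i,j} precedes {j,k} in pi. *)

definition edge_product :: "nat set list \<Rightarrow> nat \<Rightarrow> nat" where
  "edge_product S = foldr (\<lambda>e p. edge_transp e \<circ> p) S id"

definition expansion_coeff :: "nat set list \<Rightarrow> (nat \<Rightarrow> nat) \<Rightarrow> complex" where
  "expansion_coeff \<pi> s = (\<Sum>S\<leftarrow>subseqs \<pi>. if s = edge_product S then (-1) ^ length S else 0)"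

lemma edge_transp_involution [simp]: "edge_transp e \<circ> edge_transp e = id"
  by (simp add: edge_transp_def)

lemma inv_edge_transp [simp]: "inv (edge_transp e) = edge_transp e"
  by (simp add: inv_unique_comp)

lemma expansion_coeff_Cons:
  "expansion_coeff (e # \<pi>) s = expansion_coeff \<pi> s - expansion_coeff \<pi> (edge_transp e \<circ> s)"
proof -
  let ?c = "\<lambda>s S. if s = edge_product S then (-1::complex) ^ length S else 0"
  have cancel: "edge_transp e \<circ> (edge_transp e \<circ> q) = q" for q
    by (simp flip: comp_assoc)
  then have "s = edge_transp e \<circ> p \<longleftrightarrow> edge_transp e \<circ> s = p" for p
    by metis
  then have "?c s (e # S) = - ?c (edge_transp e \<circ> s) S" for S
    by (simp add: edge_product_def)
  then have "(\<Sum>S\<leftarrow>map (Cons e) (subseqs \<pi>). ?c s S) = - expansion_coeff \<pi> (edge_transp e \<circ> s)"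
    by (simp add: expansion_coeff_def o_def uminus_sum_list_map)
  then show ?thesis by (simp add: expansion_coeff_def Let_def)
qed

lemma finite_Sn: "finite (Sn n)"
  by (simp add: Sn_def finite_permutations)

lemma ga_mult_one_minus_basis:
  assumes "t \<in> Sn n"
  shows "ga_mult n (ga_diff (ga_one n) (ga_basis n t)) F s
    = (if s \<in> Sn n then F s - F (inv t \<circ> s) else 0)"
proof -
  have basis: "(\<Sum>u\<in>Sn n. ga_basis n p u * F (inv u \<circ> s)) = F (inv p \<circ> s)" if "p \<in> Sn n" for p
    using that finite_Sn by (simp add: ga_basis_def if_distrib[of "\<lambda>x. x * _"] sum.delta' cong: if_cong)
  show ?thesis
  proof (cases "s \<in> Sn n")
    case True
    have "id \<in> Sn n" by (simp add: Sn_def permutes_id)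
    moreover have "ga_mult n (ga_diff (ga_one n) (ga_basis n t)) F s
      = (\<Sum>u\<in>Sn n. ga_basis n id u * F (inv u \<circ> s)) - (\<Sum>u\<in>Sn n. ga_basis n t u * F (inv u \<circ> s))"
      using True by (simp add: ga_mult_def ga_diff_def ga_one_def left_diff_distrib sum_subtractf)
    ultimately show ?thesis using assms True by (simp add: basis)
  qed (simp add: ga_mult_def)
qed

lemma Kpi_apply:
  assumes "\<forall>e\<in>set \<pi>. edge_transp e \<in> Sn n"
  shows "Kpi n \<pi> s = of_nat (fact n) * (if s \<in> Sn n then expansion_coeff \<pi> s else 0)"
proof -
  have "foldr (\<lambda>e acc. ga_mult n (ga_diff (ga_one n) (ga_basis n (edge_transp e))) acc) \<pi> (ga_one n)
      = (\<lambda>s. if s \<in> Sn n then expansion_coeff \<pi> s else 0)"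
    using assms
  proof (induction \<pi>)
    case Nil
    show ?case by (auto simp: ga_one_def ga_basis_def expansion_coeff_def edge_product_def)
  next
    case (Cons e \<pi>)
    moreover have "edge_transp e \<circ> s \<in> Sn n" if "s \<in> Sn n" for s
      using Cons.prems that by (simp add: Sn_def permutes_compose)
    ultimately show ?case
      by (auto simp: ga_mult_one_minus_basis expansion_coeff_Cons)
  qed
  then show ?thesis by (simp add: Kpi_def ga_scale_def)
qed

lemma expansion_coeff_eq_of_Kpi_eq:
  assumes "\<forall>e\<in>set \<pi>1. edge_transp e \<in> Sn n" "\<forall>e\<in>set \<pi>2. edge_transp e \<in> Sn n"
    and "Kpi n \<pi>1 = Kpi n \<pi>2" "s \<in> Sn n"
  shows "expansion_coeff \<pi>1 s = expansion_coeff \<pi>2 s"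
  using fun_cong[OF assms(3), of s] by (simp add: Kpi_apply[OF assms(1)] Kpi_apply[OF assms(2)] assms(4))

lemma Nil_in_subseqs: "[] \<in> set (subseqs xs)"
  by (induction xs) (auto simp: Let_def)

lemma singleton_in_subseqs_iff: "[x] \<in> set (subseqs xs) \<longleftrightarrow> x \<in> set xs"
  by (induction xs) (auto simp: Let_def Nil_in_subseqs)

lemma precedes_Cons: "precedes x y (z # zs) \<longleftrightarrow> (z = x \<and> y \<in> set zs) \<or> precedes x y zs"
proof
  assume "precedes x y (z # zs)"
  then obtain p q where pq: "p < q" "q < length (z # zs)" "(z # zs) ! p = x" "(z # zs) ! q = y"
    unfolding precedes_def by blast
  then obtain q' where q': "q = Suc q'" "q' < length zs" "zs ! q' = y"
    by (cases q) auto
  show "(z = x \<and> y \<in> set zs) \<or> precedes x y zs"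
  proof (cases p)
    case 0
    then show ?thesis using pq(3) q' by auto
  next
    case (Suc p')
    then have "p' < q'" "zs ! p' = x" using pq(1,3) q'(1) by simp_all
    then show ?thesis using q' unfolding precedes_def by blast
  qed
next
  assume "(z = x \<and> y \<in> set zs) \<or> precedes x y zs"
  then show "precedes x y (z # zs)"
  proof
    assume "z = x \<and> y \<in> set zs"
    then obtain q where "q < length zs" "zs ! q = y" "z = x" by (auto simp: in_set_conv_nth)
    then show ?thesis unfolding precedes_def by (intro exI[of _ 0] exI[of _ "Suc q"]) auto
  next
    assume "precedes x y zs"
    then obtain p q where "p < q" "q < length zs" "zs ! p = x" "zs ! q = y"
      unfolding precedes_def by blast
    then show ?thesis unfolding precedes_def by (intro exI[of _ "Suc p"] exI[of _ "Suc q"]) auto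
  qed
qed

lemma pair_in_subseqs_iff_precedes: "[x, y] \<in> set (subseqs xs) \<longleftrightarrow> precedes x y xs"
proof (induction xs)
  case Nil
  show ?case by (simp add: precedes_def)
next
  case (Cons z zs)
  have "[x, y] \<in> set (subseqs (z # zs))
      \<longleftrightarrow> (z = x \<and> [y] \<in> set (subseqs zs)) \<or> [x, y] \<in> set (subseqs zs)"
    by (auto simp: Let_def)
  then show ?case using Cons.IH by (simp add: precedes_Cons singleton_in_subseqs_iff)
qed

lemma is_graph_edgeE:
  assumes "is_graph n E" "e \<in> E"
  obtains a b where "e = {a, b}" "a \<noteq> b" "a \<in> {1..n}" "b \<in> {1..n}"
  using assms unfolding is_graph_def by blast

lemma is_graph_doubleton_edge:
  assumes "is_graph n E" "{a, b} \<in> E"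
  shows "a \<noteq> b" "a \<in> {1..n}" "b \<in> {1..n}"
  using assms by (auto elim!: is_graph_edgeE simp: doubleton_eq_iff)

lemma edge_transp_doubleton: "a \<noteq> b \<Longrightarrow> edge_transp {a, b} = transpose a b"
  by (cases "a < b") (auto simp: edge_transp_def min_def max_def transpose_commute)

lemma transpose_in_Sn: "a \<in> {1..n} \<Longrightarrow> b \<in> {1..n} \<Longrightarrow> transpose a b \<in> Sn n"
  by (simp add: Sn_def permutes_swap_id)

lemma edge_transp_in_Sn: "is_graph n E \<Longrightarrow> e \<in> E \<Longrightarrow> edge_transp e \<in> Sn n"
  by (metis is_graph_edgeE edge_transp_doubleton transpose_in_Sn)

lemma is_graph_eqI:
  assumes "is_graph n E1" "is_graph n E2"
    and "\<And>a b. a \<noteq> b \<Longrightarrow> a \<in> {1..n} \<Longrightarrow> b \<in> {1..n} \<Longrightarrow> {a, b} \<in> E1 \<longleftrightarrow> {a, b} \<in> E2"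
  shows "E1 = E2"
proof -
  have "e \<in> E1 \<longleftrightarrow> e \<in> E2" if e: "e \<in> E1 \<union> E2" for e
  proof -
    obtain a b where "e = {a, b}" "a \<noteq> b" "a \<in> {1..n}" "b \<in> {1..n}"
      using e assms(1,2) by (auto elim: is_graph_edgeE)
    then show ?thesis using assms(3) by simp
  qed
  then show ?thesis by blast
qed

lemma edge_ordering_transp_in_Sn:
  "is_graph n E \<Longrightarrow> edge_ordering E \<pi> \<Longrightarrow> \<forall>e\<in>set \<pi>. edge_transp e \<in> Sn n"
  by (auto simp: edge_ordering_def intro: edge_transp_in_Sn)

lemma triangle_has_cycle:
  assumes "{i, j} \<in> E" "{j, k} \<in> E" "{k, i} \<in> E" "distinct [i, j, k]"
  shows "has_cycle E"
  unfolding has_cycle_def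
proof (intro exI[of _ "[i, j, k]"] conjI allI impI)
  fix m assume "m < length [i, j, k]"
  then consider "m = 0" | "m = 1" | "m = 2" by fastforce
  then show "{[i, j, k] ! m, [i, j, k] ! ((m + 1) mod length [i, j, k])} \<in> E"
    by cases (use assms in auto)
qed (use assms(4) in auto)

lemma acyclic_edge_not_reachable:
  assumes "\<not> has_cycle E" "F \<subseteq> E" "{a, b} \<in> E" "{a, b} \<notin> F" "a \<noteq> b"
  shows "(a, b) \<notin> (adj_rel F)\<^sup>*"
proof
  let ?R = "\<lambda>u v. (u, v) \<in> adj_rel F"
  assume "(a, b) \<in> (adj_rel F)\<^sup>*"
  then have "?R\<^sup>*\<^sup>* a b" by (simp add: rtranclp_rtrancl_eq)
  then obtain xs where "rtrancl_path ?R a xs b" unfolding rtranclp_eq_rtrancl_path by blast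
  then obtain ys where ys: "rtrancl_path ?R a ys b" "distinct (a # ys)"
    by (rule rtrancl_path_distinct)
  let ?cs = "a # ys"
  have step: "{?cs ! i, ys ! i} \<in> F" if "i < length ys" for i
    using rtrancl_path_nth[OF ys(1) that] by (simp add: adj_rel_def)
  have "ys \<noteq> []" using ys(1) \<open>a \<noteq> b\<close> by (auto elim: rtrancl_path.cases)
  then have last: "ys ! (length ys - 1) = b"
    using rtrancl_path_last[OF ys(1)] by (simp add: last_conv_nth)
  have "length ys \<noteq> 1"
  proof
    assume "length ys = 1"
    then show False using step[of 0] last assms(4) by simp
  qed
  then have long: "length ?cs \<ge> 3" using \<open>ys \<noteq> []\<close> by (cases "length ys") auto
  have cycle: "{?cs ! i, ?cs ! ((i + 1) mod length ?cs)} \<in> E" if "i < length ?cs" for i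
  proof (cases "i < length ys")
    case True
    then show ?thesis using step[OF True] assms(2) by auto
  next
    case False
    then have "i = length ys" using that by simp
    then show ?thesis using last assms(3) \<open>ys \<noteq> []\<close> by (simp add: insert_commute)
  qed
  then have "has_cycle E" unfolding has_cycle_def using long ys(2) cycle by blast
  then show False using assms(1) by simp
qed

lemma edge_product_support:
  assumes "is_graph n E" "\<not> has_cycle E" "distinct S" "set S \<subseteq> E"
  shows "{v. edge_product S v \<noteq> v} = \<Union>(set S) \<and> (\<forall>v. (v, edge_product S v) \<in> (adj_rel (set S))\<^sup>*)"
  using assms(3,4)
proof (induction S)
  case Nil
  then show ?case by (simp add: edge_product_def)
next
  case (Cons e S)
  let ?p = "edge_product S"
  obtain a b where e: "e = {a, b}" "a \<noteq> b" using assms(1) Cons.prems by (auto elim: is_graph_edgeE)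
  have IH: "{v. ?p v \<noteq> v} = \<Union>(set S)" "(v, ?p v) \<in> (adj_rel (set S))\<^sup>*" for v
    using Cons by auto
  have ab: "(a, b) \<notin> (adj_rel (set S))\<^sup>*" "(b, a) \<notin> (adj_rel (set S))\<^sup>*"
    using acyclic_edge_not_reachable[OF assms(2), of "set S"] Cons.prems e
    by (auto simp: insert_commute)
  have p_ab: "?p a \<noteq> b" "?p b \<noteq> a" using IH(2) ab by metis+
  have P: "edge_product (e # S) = transpose a b \<circ> ?p"
    using e by (simp add: edge_product_def edge_transp_doubleton)
  have "edge_product (e # S) v \<noteq> v \<longleftrightarrow> v = a \<or> v = b \<or> ?p v \<noteq> v" for v
    using p_ab e(2) unfolding P by (auto simp: transpose_eq_iff)
  then have support: "{v. edge_product (e # S) v \<noteq> v} = \<Union>(set (e # S))"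
    using IH(1) e by auto
  have "(adj_rel (set S))\<^sup>* \<subseteq> (adj_rel (set (e # S)))\<^sup>*"
    by (rule rtrancl_mono) (auto simp: adj_rel_def)
  moreover have "(u, transpose a b u) \<in> (adj_rel (set (e # S)))\<^sup>*" for u
    using e by (cases "u = a"; cases "u = b") (auto simp: adj_rel_def insert_commute)
  ultimately have "(v, edge_product (e # S) v) \<in> (adj_rel (set (e # S)))\<^sup>*" for v
    using IH(2)[of v] P by (auto intro: rtrancl_trans)
  with support show ?case by blast
qed

definition determined_by_product :: "nat set set \<Rightarrow> nat set list \<Rightarrow> bool" where
  "determined_by_product E S0 \<longleftrightarrow>
     (\<forall>S. distinct S \<and> set S \<subseteq> E \<and> edge_product S = edge_product S0 \<longrightarrow> S = S0)"

lemma determined_by_product_single: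
  assumes "is_graph n E" "\<not> has_cycle E" "a \<noteq> b"
  shows "determined_by_product E [{a, b}]"
  unfolding determined_by_product_def
proof (intro allI impI, elim conjE)
  fix S assume S: "distinct S" "set S \<subseteq> E" "edge_product S = edge_product [{a, b}]"
  then have "edge_product S = transpose a b"
    using assms(3) by (simp add: edge_product_def edge_transp_doubleton)
  then have support: "\<Union>(set S) = {a, b}"
    using edge_product_support[OF assms(1,2) S(1,2)] assms(3) by (auto simp: transpose_eq_iff)
  have "e = {a, b}" if e: "e \<in> set S" for e
  proof -
    obtain x y where "e = {x, y}" "x \<noteq> y" using assms(1) S(2) e by (blast elim: is_graph_edgeE)
    moreover have "e \<subseteq> {a, b}" using support e by blast
    ultimately show ?thesis by auto
  qed
  then have set_S: "set S = {{a, b}}" using support by auto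
  then have "length S = 1" using distinct_card[OF S(1)] by simp
  then obtain x where "S = [x]" by (cases S) auto
  with set_S show "S = [{a, b}]" by simp
qed

lemma determined_by_product_adjacent:
  assumes "is_graph n E" "\<not> has_cycle E" "{i, j} \<in> E" "{j, k} \<in> E" "{i, j} \<noteq> {j, k}"
  shows "determined_by_product E [{i, j}, {j, k}]"
  unfolding determined_by_product_def
proof (intro allI impI, elim conjE)
  fix S assume S: "distinct S" "set S \<subseteq> E" "edge_product S = edge_product [{i, j}, {j, k}]"
  have ij: "i \<noteq> j" and jk: "j \<noteq> k" using is_graph_doubleton_edge[OF assms(1)] assms(3,4) by blast+
  have ik: "i \<noteq> k" using assms(5) by (auto simp: insert_commute)
  have q: "edge_product S = transpose i j \<circ> transpose j k"
    using S(3) ij jk by (simp add: edge_product_def edge_transp_doubleton)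
  moreover have "{v. (transpose i j \<circ> transpose j k) v \<noteq> v} = {i, j, k}"
    using ij jk ik by (auto simp: transpose_def)
  ultimately have support: "\<Union>(set S) = {i, j, k}"
    using edge_product_support[OF assms(1,2) S(1,2)] by simp
  have "{k, i} \<notin> E" using triangle_has_cycle[OF assms(3,4)] assms(2) ij jk ik by auto
  have sub: "set S \<subseteq> {{i, j}, {j, k}}"
  proof
    fix e assume "e \<in> set S"
    then obtain x y where "e = {x, y}" "x \<noteq> y" "e \<in> E"
      using assms(1) S(2) by (blast elim: is_graph_edgeE)
    moreover have "e \<subseteq> {i, j, k}" using support \<open>e \<in> set S\<close> by blast
    ultimately show "e \<in> {{i, j}, {j, k}}" using \<open>{k, i} \<notin> E\<close> by (auto simp: insert_commute)
  qed
  have "{i, j} \<in> set S" "{j, k} \<in> set S" using support sub ij ik jk by blast+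
  with sub have set_S: "set S = {{i, j}, {j, k}}" by blast
  then have "length S = 2" using distinct_card[OF S(1)] assms(5) by simp
  then obtain x y where S_xy: "S = [x, y]" by (auto simp: length_Suc_conv numeral_2_eq_2)
  have "S \<noteq> [{j, k}, {i, j}]"
  proof
    assume "S = [{j, k}, {i, j}]"
    then have "(transpose j k \<circ> transpose i j) i = (transpose i j \<circ> transpose j k) i"
      using q ij jk by (simp add: edge_product_def edge_transp_doubleton)
    then show False using ij jk ik by simp
  qed
  then show "S = [{i, j}, {j, k}]" using S_xy set_S assms(5) by (auto simp: doubleton_eq_iff)
qed

lemma subseqs_of_edge_ordering:
  assumes "edge_ordering E \<pi>" "S \<in> set (subseqs \<pi>)"
  shows "distinct S" "set S \<subseteq> E"
  using assms subseqs_distinctD subseqs_powset[of \<pi>] by (auto simp: edge_ordering_def)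

lemma expansion_coeff_determined:
  assumes "edge_ordering E \<pi>" "determined_by_product E S0"
  shows "expansion_coeff \<pi> (edge_product S0)
    = (if S0 \<in> set (subseqs \<pi>) then (-1) ^ length S0 else 0)"
proof -
  have "distinct (subseqs \<pi>)"
    using assms(1) distinct_set_subseqs distinct_map by (auto simp: edge_ordering_def)
  then have "expansion_coeff \<pi> (edge_product S0)
      = (\<Sum>S\<in>set (subseqs \<pi>). if edge_product S0 = edge_product S then (-1) ^ length S else 0)"
    unfolding expansion_coeff_def by (rule sum_list_distinct_conv_sum_set)
  also have "\<dots> = (\<Sum>S\<in>set (subseqs \<pi>). if S = S0 then (-1) ^ length S0 else 0)"
    using assms subseqs_of_edge_ordering[OF assms(1)]
    by (intro sum.cong) (auto simp: determined_by_product_def)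
  finally show ?thesis by simp
qed

lemma mem_subseqs_iff_of_expansion_coeff_eq:
  assumes "edge_ordering E1 \<pi>1" "edge_ordering E2 \<pi>2"
    and "determined_by_product E1 S0" "determined_by_product E2 S0"
    and "expansion_coeff \<pi>1 (edge_product S0) = expansion_coeff \<pi>2 (edge_product S0)"
  shows "S0 \<in> set (subseqs \<pi>1) \<longleftrightarrow> S0 \<in> set (subseqs \<pi>2)"
  using assms(5) by (auto simp: expansion_coeff_determined[OF assms(1,3)]
      expansion_coeff_determined[OF assms(2,4)] split: if_splits)

theorem mainTheorem7:
  fixes n :: nat and E1 E2 :: "nat set set" and \<pi>1 \<pi>2 :: "nat set list"
  assumes "is_tree n E1" and "is_tree n E2"
    and "edge_ordering E1 \<pi>1" and "edge_ordering E2 \<pi>2"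
    and "Kpi n \<pi>1 = Kpi n \<pi>2"
  shows "E1 = E2 \<and>
    (\<forall>i j k. {i, j} \<in> E1 \<longrightarrow> {j, k} \<in> E1 \<longrightarrow> {i, j} \<noteq> {j, k} \<longrightarrow>
       precedes {i, j} {j, k} \<pi>1 \<longrightarrow> precedes {i, j} {j, k} \<pi>2)"
proof -
  have forest1: "is_graph n E1" "\<not> has_cycle E1" and forest2: "is_graph n E2" "\<not> has_cycle E2"
    using assms(1,2) by (auto simp: is_tree_def)
  from expansion_coeff_eq_of_Kpi_eq[OF edge_ordering_transp_in_Sn[OF forest1(1) assms(3)]
      edge_ordering_transp_in_Sn[OF forest2(1) assms(4)] assms(5)]
  have same_subseq: "S0 \<in> set (subseqs \<pi>1) \<longleftrightarrow> S0 \<in> set (subseqs \<pi>2)"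
    if "determined_by_product E1 S0" "determined_by_product E2 S0" "edge_product S0 \<in> Sn n" for S0
    using mem_subseqs_iff_of_expansion_coeff_eq[OF assms(3,4) that(1,2)] that(3) by blast
  have same_edge: "{a, b} \<in> E1 \<longleftrightarrow> {a, b} \<in> E2" if "a \<noteq> b" "a \<in> {1..n}" "b \<in> {1..n}" for a b
    using same_subseq[OF determined_by_product_single[OF forest1 that(1)]
        determined_by_product_single[OF forest2 that(1)]] assms(3,4) that
    by (simp add: edge_product_def edge_transp_doubleton transpose_in_Sn singleton_in_subseqs_iff
        edge_ordering_def)
  have "E1 = E2" using forest1(1) forest2(1) same_edge by (rule is_graph_eqI)
  moreover have "precedes {i, j} {j, k} \<pi>2"
    if "{i, j} \<in> E1" "{j, k} \<in> E1" "{i, j} \<noteq> {j, k}" "precedes {i, j} {j, k} \<pi>1" for i j k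
  proof -
    have "i \<noteq> j" "j \<noteq> k" "i \<in> {1..n}" "j \<in> {1..n}" "k \<in> {1..n}"
      using is_graph_doubleton_edge[OF forest1(1)] that(1,2) by blast+
    then have "edge_product [{i, j}, {j, k}] \<in> Sn n"
      by (simp add: edge_product_def edge_transp_doubleton Sn_def permutes_compose permutes_swap_id)
    then show ?thesis
      using same_subseq[OF determined_by_product_adjacent[OF forest1 that(1-3)]
          determined_by_product_adjacent[OF forest2 that(1-3)[unfolded \<open>E1 = E2\<close>]]] that(4)
      by (simp add: pair_in_subseqs_iff_precedes)
  qed
  ultimately show ?thesis by blast
qed

end
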